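(* Let $q$ be odd and $k,\ell\ge0$. If $\mathcal S_q$ is nonempty, then $D_k(a)=D_\ell(a)$ for all $a\in\mathcal S_q$ iff $k\equiv\pm\ell\pmod{q-1}$. Also, $D_k(b)=D_\ell(b)$ for all $b\in\mathcal N_q$ iff $k\equiv\pm\ell\pmod{q+1}$.
   Context: $D_k\in\mathbb Z[x]$: $D_0=2$, $D_1=x$, $D_{k+2}=xD_{k+1}-D_k$, viewed as functions on ${\mathbb F}_q$. $\mathcal S_q=\{a\in{\mathbb F}_q:a^2-4\text{ is a nonzero square in }{\mathbb F}_q\}$, $\mathcal N_q=\{a\in{\mathbb F}_q:a^2-4\text{ is a nonsquare in }{\mathbb F}_q\}$. *)

theory Defs
  imports Main "HOL-Library.Cardinality" "HOL-Number_Theory.Cong"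
begin

fun dickson :: "nat \<Rightarrow> 'a::comm_ring_1 \<Rightarrow> 'a" where
  "dickson 0 x = 2"
| "dickson (Suc 0) x = x"
| "dickson (Suc (Suc k)) x = x * dickson (Suc k) x - dickson k x"

definition S_set :: "'a::{field,finite} set" where
  "S_set = {a. \<exists>b. b \<noteq> 0 \<and> a ^ 2 - 4 = b ^ 2}"

definition N_set :: "'a::{field,finite} set" where
  "N_set = {a. \<not> (\<exists>b. a ^ 2 - 4 = b ^ 2)}"

end

theory Submission
  imports Defs "HOL-Algebra.Multiplicative_Group" "HOL-Number_Theory.Residues"
begin

text \<open>
  If u v = 1 then D_k(u + v) = u^k + v^k. The set S_q consists of the u + 1/u with u in F_q^*,
  u^2 \<noteq> 1, and N_q of the traces z + conj z of the norm-one elements z outside F_q of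
  F_q(sqrt d), d a nonsquare. The norm-one elements form a cyclic group of order q + 1: it
  contains an element of that order and has at most q + 1 elements. Both statements thus reduce
  to the fact that for g of exact order m in an integral domain,
  g^k + g^-k = g^l + g^-l iff (g^k - g^l)(g^(k+l) - 1) = 0 iff k = +-l (mod m), applied to a
  generator of F_q^* (m = q - 1) and of the norm-one group (m = q + 1).
\<close>

lemma dickson_add_inverse:
  fixes u v :: "'a::comm_ring_1"
  assumes "u * v = 1"
  shows "dickson k (u + v) = u ^ k + v ^ k"
proof (induction k rule: induct_nat_012)
  case (ge2 k)
  have "dickson (Suc (Suc k)) (u + v) = (u + v) * (u ^ Suc k + v ^ Suc k) - (u ^ k + v ^ k)"
    using ge2 by simp
  also have "\<dots> = u ^ Suc (Suc k) + v ^ Suc (Suc k) + (u * v - 1) * (u ^ k + v ^ k)"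
    by (simp add: algebra_simps)
  finally show ?case using assms by simp
qed simp_all

lemma power_eq_power_iff_cong:
  fixes g h :: "'a::comm_monoid_mult"
  assumes "g * h = 1" and order: "\<And>n. g ^ n = 1 \<longleftrightarrow> m dvd n"
  shows "g ^ k = g ^ l \<longleftrightarrow> [k = l] (mod m)"
proof -
  have "g ^ i = g ^ j \<longleftrightarrow> [i = j] (mod m)" if "i \<le> j" for i j
  proof -
    have "h ^ i * g ^ i = 1" using assms(1) by (metis mult.commute power_mult_distrib power_one)
    then have "g ^ i = g ^ i * g ^ (j - i) \<longleftrightarrow> g ^ (j - i) = 1"
      by (metis mult.assoc mult_1_left mult_1_right)
    then show ?thesis
      using that by (simp add: order cong_sym_eq[of i] cong_altdef_nat flip: power_add)
  qed
  then show ?thesis by (metis cong_sym_eq nat_le_linear)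
qed

lemma power_eq_power_if_cong:
  fixes x :: "'a::monoid_mult"
  assumes "x ^ m = 1" and "[k = l] (mod m)"
  shows "x ^ k = x ^ l"
proof -
  have "x ^ n = (x ^ m) ^ (n div m) * x ^ (n mod m)" for n
    by (metis div_mult_mod_eq mult.commute power_add power_mult)
  then have "x ^ n = x ^ (n mod m)" for n
    using assms(1) by simp
  then show ?thesis using assms(2) by (metis cong_def)
qed

lemma cong_minus_iff_dvd: "[int k = - int l] (mod int m) \<longleftrightarrow> m dvd k + l"
  by (simp add: cong_iff_dvd_diff flip: of_nat_add int_dvd_int_iff)

lemma power_eq_power_if_dvd_add:
  fixes g h :: "'a::comm_monoid_mult"
  assumes "g * h = 1" and "g ^ m = 1" and "m dvd k + l"
  shows "g ^ k = h ^ l"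
proof -
  obtain c where "k + l = m * c" using assms(3) by blast
  then have "g ^ (k + l) = 1" using assms(2) by (simp add: power_mult)
  have "g ^ k = g ^ k * (g * h) ^ l" using assms(1) by simp
  also have "\<dots> = g ^ (k + l) * h ^ l" by (simp add: power_add power_mult_distrib mult_ac)
  also have "\<dots> = h ^ l" using \<open>g ^ (k + l) = 1\<close> by simp
  finally show ?thesis .
qed

lemma power_sum_eq_if_cong:
  fixes g h :: "'a::comm_ring_1"
  assumes "g * h = 1" and "g ^ m = 1"
    and "[int k = int l] (mod int m) \<or> [int k = - int l] (mod int m)"
  shows "g ^ k + h ^ k = g ^ l + h ^ l"
proof -
  have "g ^ m * h ^ m = 1" using assms(1) by (metis power_mult_distrib power_one)
  then have "h ^ m = 1" using assms(2) by simp
  from assms(3) show ?thesis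
  proof
    assume "[int k = int l] (mod int m)"
    then have "[k = l] (mod m)" by (simp add: cong_int_iff)
    then show ?thesis
      using power_eq_power_if_cong \<open>g ^ m = 1\<close> \<open>h ^ m = 1\<close> by metis
  next
    assume "[int k = - int l] (mod int m)"
    then have "m dvd k + l" "m dvd l + k" by (simp_all add: cong_minus_iff_dvd add.commute)
    then show ?thesis
      using power_eq_power_if_dvd_add[of g h m] power_eq_power_if_dvd_add[of h g m]
        assms(1,2) \<open>h ^ m = 1\<close> by (simp add: mult.commute add.commute)
  qed
qed

lemma cong_if_power_sum_eq:
  fixes g h :: "'a::comm_ring_1"
  assumes no_zero_divisors: "\<And>a b::'a. a * b = 0 \<Longrightarrow> a = 0 \<or> b = 0"
    and gh: "g * h = 1" and order: "\<And>n. g ^ n = 1 \<longleftrightarrow> m dvd n"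
    and sum_eq: "g ^ k + h ^ k = g ^ l + h ^ l"
  shows "[int k = int l] (mod int m) \<or> [int k = - int l] (mod int m)"
proof -
  have "g ^ (k + l) * h ^ k = g ^ l * (g * h) ^ k"
    and "g ^ (k + l) * h ^ l = g ^ k * (g * h) ^ l"
    by (simp_all add: power_add power_mult_distrib algebra_simps)
  then have "g ^ (k + l) * (g ^ k + h ^ k) = g ^ (k + l) * g ^ k + g ^ l"
    and "g ^ (k + l) * (g ^ l + h ^ l) = g ^ (k + l) * g ^ l + g ^ k"
    using gh by (simp_all add: distrib_left)
  with sum_eq have "(g ^ k - g ^ l) * (g ^ (k + l) - 1) = 0"
    by (simp add: algebra_simps)
  then have "g ^ k - g ^ l = 0 \<or> g ^ (k + l) - 1 = 0"
    using no_zero_divisors by blast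
  then have "g ^ k = g ^ l \<or> g ^ (k + l) = 1"
    by simp
  then show ?thesis
    using power_eq_power_iff_cong[OF gh order] order
    by (auto simp: cong_int_iff cong_minus_iff_dvd)
qed

lemma finite_units_cyclic:
  assumes units: "\<And>x::'a::{comm_ring_1,finite}. x \<noteq> 0 \<Longrightarrow> \<exists>y. x * y = 1"
  shows "\<exists>g::'a. (\<forall>n. g ^ n = 1 \<longleftrightarrow> (CARD('a) - 1) dvd n) \<and> (\<forall>x. x \<noteq> 0 \<longrightarrow> (\<exists>i. x = g ^ i))"
proof -
  define R :: "'a ring"
    where "R = \<lparr>carrier = UNIV, monoid.mult = (*), one = 1, zero = 0, add = (+)\<rparr>"
  have no_zero_divisors: "x = 0 \<or> y = 0" if "x * y = 0" for x y :: 'a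
  proof (cases "x = 0")
    case False
    then obtain i where "x * i = 1" using units by blast
    then have "y = i * (x * y)" by (simp add: mult.assoc [symmetric] mult.commute [of i])
    then show ?thesis using that by simp
  qed simp
  have "\<exists>y. x * y = 1 \<and> y * x = 1" if "x \<noteq> 0" for x :: 'a
    using units[OF that] by (metis mult.commute)
  moreover have "\<exists>y. x + y = 0" for x :: 'a
    by (rule exI[of _ "- x"]) simp
  ultimately have "field R"
    unfolding R_def using no_zero_divisors
    by unfold_locales (auto simp: algebra_simps Units_def)
  then interpret R: field R .
  have pow: "x [^]\<^bsub>R\<^esub> n = x ^ n" for x and n :: nat
    by (induction n) (simp_all add: R_def)
  have finite: "finite (carrier R)" by (simp add: R_def)
  interpret G: group "mult_of R" by (rule R.field_mult_group)
  obtain g where g: "g \<in> carrier (mult_of R)"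
    and gen: "carrier (mult_of R) = {g [^]\<^bsub>R\<^esub> i | i::nat. i \<in> UNIV}"
    using R.finite_field_mult_group_has_gen[OF finite] by blast
  have "G.ord g \<noteq> 0" using G.ord_ge_1[OF _ g] finite by simp
  then have "generate (mult_of R) {g} = carrier (mult_of R)"
    using G.generate_pow_nat[OF g \<open>G.ord g \<noteq> 0\<close>] by (simp only: gen nat_pow_mult_of)
  then have "G.ord g = card (carrier (mult_of R))"
    using G.generate_pow_card[OF g] by simp
  also have "\<dots> = CARD('a) - 1" by (simp add: R_def)
  finally have "g ^ n = 1 \<longleftrightarrow> (CARD('a) - 1) dvd n" for n
    using G.pow_eq_id[OF g, of n] by (simp add: nat_pow_mult_of pow, simp add: R_def)
  moreover have "\<exists>i. x = g ^ i" if "x \<noteq> 0" for x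
  proof -
    have "x \<in> carrier (mult_of R)" using that by (simp add: R_def)
    then show ?thesis unfolding gen by (auto simp: pow)
  qed
  ultimately show ?thesis by blast
qed

lemma finite_field_cyclic:
  "\<exists>g::'a::{field,finite}. (\<forall>n. g ^ n = 1 \<longleftrightarrow> (CARD('a) - 1) dvd n) \<and> (\<forall>x. x \<noteq> 0 \<longrightarrow> (\<exists>i. x = g ^ i))"
  by (rule finite_units_cyclic) (metis right_inverse)

lemma finite_field_power_card_minus_1:
  fixes x :: "'a::{field,finite}"
  assumes "x \<noteq> 0"
  shows "x ^ (CARD('a) - 1) = 1"
proof -
  obtain g :: 'a where order: "\<And>n. g ^ n = 1 \<longleftrightarrow> (CARD('a) - 1) dvd n"
    and gen: "\<And>x. x \<noteq> 0 \<Longrightarrow> \<exists>i. x = g ^ i"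
    using finite_field_cyclic by blast
  obtain i where "x = g ^ i" using gen assms by blast
  then have "x ^ (CARD('a) - 1) = (g ^ (CARD('a) - 1)) ^ i"
    by (simp flip: power_mult add: mult.commute)
  moreover have "g ^ (CARD('a) - 1) = 1" using order by simp
  ultimately show ?thesis by simp
qed

lemma two_neq_zero_if_odd_card:
  assumes "odd CARD('a::{field,finite})"
  shows "(2::'a) \<noteq> 0"
proof
  assume "(2::'a) = 0"
  then have "of_nat 2 = (0::'a)" by simp
  then have "CHAR('a) dvd 2" by (simp only: of_nat_eq_0_iff_char_dvd)
  moreover have "CHAR('a) \<noteq> Suc 0" by simp
  moreover have "CHAR('a) \<noteq> 0" using finite_imp_CHAR_pos[where 'a='a] by simp
  ultimately have "CHAR('a) = 2"
    by (metis dvd_imp_le le_antisym less_2_cases not_le zero_less_numeral)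
  then show False using CHAR_dvd_CARD[where 'a='a] assms by simp
qed

lemma exists_nonsquare:
  assumes "(2::'a::{field,finite}) \<noteq> 0"
  shows "\<exists>d::'a. \<forall>b. d \<noteq> b ^ 2"
proof (rule ccontr)
  assume "\<not> ?thesis"
  then have "surj (\<lambda>b::'a. b ^ 2)" by (metis surjI)
  then have "inj (\<lambda>b::'a. b ^ 2)" by (simp add: finite_UNIV_surj_inj)
  moreover have "(1::'a) ^ 2 = (- 1) ^ 2" by simp
  ultimately have "(1::'a) = - 1" by (meson injD)
  then show False using assms by (metis one_add_one add.right_inverse)
qed

lemma nonsquare_eq_mult_square:
  fixes c d :: "'a::{field,finite}"
  assumes c: "\<forall>b. c \<noteq> b ^ 2" and d: "\<forall>b. d \<noteq> b ^ 2"
  shows "\<exists>t. c = d * t ^ 2"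
proof -
  obtain g :: 'a where gen: "\<And>x. x \<noteq> 0 \<Longrightarrow> \<exists>i. x = g ^ i"
    using finite_field_cyclic by blast
  have "\<exists>i. x = g ^ (2 * i + 1)" if nonsquare: "\<forall>b. x \<noteq> b ^ 2" for x
  proof -
    have "x \<noteq> 0" using nonsquare[rule_format, of 0] by simp
    then obtain i where i: "x = g ^ i" using gen by blast
    have "odd i"
    proof
      assume "even i"
      then obtain t where "i = 2 * t" by blast
      then have "x = (g ^ t) ^ 2" using i by (simp add: power_mult mult.commute)
      then show False using nonsquare by blast
    qed
    then obtain t where "i = 2 * t + 1" by (rule oddE)
    then show ?thesis using i by blast
  qed
  then obtain i j where ij: "c = g ^ (2 * i + 1)" "d = g ^ (2 * j + 1)" using c d by blast
  have "(2 * i + 1) + (2 * j + 1) = (i + j + 1) * 2" by simp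
  then have "c * d = (g ^ (i + j + 1)) ^ 2"
    by (simp only: ij power_mult flip: power_add)
  then obtain s where cd: "c * d = s ^ 2" by blast
  have "d \<noteq> 0" using d[rule_format, of 0] by simp
  then have "d * (s / d) ^ 2 = s ^ 2 / d"
    by (simp add: power2_eq_square)
  also have "\<dots> = c"
    unfolding cd [symmetric] using \<open>d \<noteq> 0\<close> by simp
  finally have "c = d * (s / d) ^ 2" ..
  then show ?thesis ..
qed

text \<open>Junk when no nonsquare exists (e.g.\ in characteristic 2); every lemma using it assumes one does.\<close>
definition some_nonsquare :: "'a::comm_ring_1" where
  "some_nonsquare = (SOME d. \<forall>b. d \<noteq> b ^ 2)"

lemma some_nonsquare_not_square:
  assumes "(2::'a::{field,finite}) \<noteq> 0"
  shows "\<forall>b. (some_nonsquare::'a) \<noteq> b ^ 2"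
  unfolding some_nonsquare_def by (rule someI_ex[OF exists_nonsquare[OF assms]])

text \<open>\<open>Ext x y\<close> stands for x + y sqrt d with d = \<open>some_nonsquare\<close>; over a finite field F_q of
  odd order this is F_(q^2).\<close>
datatype 'a qext = Ext (re: 'a) (im: 'a)

instantiation qext :: (comm_ring_1) comm_ring_1
begin
definition "0 = Ext 0 0"
definition "1 = Ext 1 0"
definition "z + w = Ext (re z + re w) (im z + im w)"
definition "z - w = Ext (re z - re w) (im z - im w)"
definition "- z = Ext (- re z) (- im z)"
definition "z * w = Ext (re z * re w + some_nonsquare * im z * im w) (re z * im w + im z * re w)"
instance
  by standard (auto simp: zero_qext_def one_qext_def plus_qext_def minus_qext_def
      uminus_qext_def times_qext_def algebra_simps intro: qext.expand)
end

lemma qext_eq_iff: "z = w \<longleftrightarrow> re z = re w \<and> im z = im w"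
  by (auto intro: qext.expand)

lemma re_im_qext_simps [simp]:
  "re 0 = 0" "im 0 = 0" "re 1 = 1" "im 1 = 0"
  "re (z + w) = re z + re w" "im (z + w) = im z + im w"
  "re (z - w) = re z - re w" "im (z - w) = im z - im w"
  "re (- z) = - re z" "im (- z) = - im z"
  "re (z * w) = re z * re w + some_nonsquare * im z * im w"
  "im (z * w) = re z * im w + im z * re w"
  by (simp_all add: zero_qext_def one_qext_def plus_qext_def minus_qext_def
      uminus_qext_def times_qext_def)

lemma re_im_two [simp]: "re 2 = 2" "im 2 = 0"
  by (metis one_add_one re_im_qext_simps(3,5), metis add_0 one_add_one re_im_qext_simps(4,6))

lemma UNIV_qext: "(UNIV :: 'a qext set) = (\<lambda>(x, y). Ext x y) ` UNIV"
  by (auto intro: qext.expand) (metis qext.collapse rangeI case_prod_conv)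

instance qext :: (finite) finite
  by standard (simp add: UNIV_qext)

lemma card_qext: "CARD('a::finite qext) = CARD('a) * CARD('a)"
proof -
  have "inj (\<lambda>(x::'a, y). Ext x y)" by (auto simp: inj_def)
  then show ?thesis
    by (simp add: UNIV_qext card_image card_cartesian_product flip: UNIV_Times_UNIV)
qed

lemma dickson_Ext:
  fixes a :: "'a::comm_ring_1"
  shows "dickson k (Ext a 0) = Ext (dickson k a) 0"
proof (induction k rule: induct_nat_012)
  case 0 then show ?case by (simp add: qext_eq_iff)
next
  case 1 then show ?case by simp
next
  case (ge2 k) then show ?case by (simp add: qext_eq_iff)
qed

definition qconj :: "'a::comm_ring_1 qext \<Rightarrow> 'a qext" where
  "qconj z = Ext (re z) (- im z)"

definition nrm :: "'a::comm_ring_1 qext \<Rightarrow> 'a" where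
  "nrm z = re z ^ 2 - some_nonsquare * im z ^ 2"

lemma mult_qconj: "z * qconj z = Ext (nrm z) 0"
  by (simp add: qext_eq_iff qconj_def nrm_def power2_eq_square algebra_simps)

lemma add_qconj: "z + qconj z = Ext (2 * re z) 0"
  by (simp add: qext_eq_iff qconj_def)

lemma nrm_mult: "nrm (z * w) = nrm z * nrm w"
  by (simp add: nrm_def power2_eq_square algebra_simps)

lemma nrm_power: "nrm (z ^ n) = nrm z ^ n"
  by (induction n) (simp_all add: nrm_mult, simp add: nrm_def)

lemma nrm_eq_0_iff:
  fixes z :: "'a::field qext"
  assumes ns: "\<forall>b::'a. some_nonsquare \<noteq> b ^ 2"
  shows "nrm z = 0 \<longleftrightarrow> z = 0"
proof
  assume nrm: "nrm z = 0"
  have "im z = 0"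
  proof (rule ccontr)
    assume "im z \<noteq> 0"
    then have "some_nonsquare = (re z / im z) ^ 2"
      using nrm by (simp add: nrm_def power_divide)
    then show False using ns by blast
  qed
  then show "z = 0" using nrm by (simp add: nrm_def qext_eq_iff)
qed (simp add: nrm_def)

lemma qext_right_inverse:
  fixes z :: "'a::field qext"
  assumes "\<forall>b::'a. some_nonsquare \<noteq> b ^ 2" and "z \<noteq> 0"
  shows "z * (qconj z * Ext (inverse (nrm z)) 0) = 1"
  using assms by (simp add: mult.assoc [symmetric] mult_qconj qext_eq_iff nrm_eq_0_iff)

lemma qext_no_zero_divisors:
  fixes z w :: "'a::field qext"
  assumes "\<forall>b::'a. some_nonsquare \<noteq> b ^ 2" and "z * w = 0"
  shows "z = 0 \<or> w = 0"
proof -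
  have "nrm z * nrm w = 0" using assms(2) nrm_mult[of z w] by (simp add: nrm_def)
  then show ?thesis using nrm_eq_0_iff[OF assms(1)] by auto
qed

lemma re_eq_if_nrm_eq_1:
  fixes z :: "'a::field qext"
  assumes ns: "\<forall>b::'a. some_nonsquare \<noteq> b ^ 2" and nrm: "nrm z = 1" and "re z \<noteq> -1"
  defines "t \<equiv> some_nonsquare * (im z / (re z + 1)) ^ 2"
  shows "re z = (1 + t) / (1 - t)"
proof -
  define s where "s = im z / (re z + 1)"
  have "re z + 1 \<noteq> 0" using assms(3) by (simp add: add_eq_0_iff2)
  then have im: "im z = s * (re z + 1)" by (simp add: s_def)
  have "(re z - 1) * (re z + 1) = re z ^ 2 - 1" by (simp add: power2_eq_square algebra_simps)
  also have "\<dots> = some_nonsquare * im z ^ 2" using nrm by (simp add: nrm_def algebra_simps)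
  also have "\<dots> = t * (re z + 1) * (re z + 1)" by (simp add: t_def im power2_eq_square flip: s_def)
  finally have "re z - 1 = t * (re z + 1)" using \<open>re z + 1 \<noteq> 0\<close> by simp
  moreover have "1 - t \<noteq> 0"
  proof
    assume "1 - t = 0"
    then have sq: "some_nonsquare * im z ^ 2 = (re z + 1) ^ 2"
      using \<open>re z + 1 \<noteq> 0\<close> by (simp add: t_def power_divide field_simps)
    then have "im z \<noteq> 0" using \<open>re z + 1 \<noteq> 0\<close> by auto
    then have "some_nonsquare = ((re z + 1) / im z) ^ 2"
      using sq by (simp add: power_divide field_simps)
    then show False using ns by blast
  qed
  ultimately show ?thesis by (simp add: field_simps)
qed

text \<open>Stereographic projection from -1 maps the norm-one conic injectively into F_q plus one point.\<close>
lemma card_nrm_eq_1_le: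
  assumes ns: "\<forall>b::'a::{field,finite}. some_nonsquare \<noteq> b ^ 2"
  shows "card {z::'a qext. nrm z = 1} \<le> CARD('a) + 1"
proof -
  define f :: "'a qext \<Rightarrow> 'a option"
    where "f z = (if re z = -1 then None else Some (im z / (re z + 1)))" for z
  have "some_nonsquare \<noteq> (0::'a)" using ns by (metis zero_power2)
  then have im_0: "im z = 0" if "nrm z = 1" "re z = -1" for z :: "'a qext"
    using that by (simp add: nrm_def)
  have "inj_on f {z. nrm z = 1}"
  proof (rule inj_onI)
    fix z w :: "'a qext"
    assume z: "z \<in> {z. nrm z = 1}" and w: "w \<in> {z. nrm z = 1}" and "f z = f w"
    show "z = w"
    proof (cases "re z = -1")
      case True
      then have "re w = -1" using \<open>f z = f w\<close> by (auto simp: f_def split: if_splits)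
      then show ?thesis using True z w im_0 by (simp add: qext_eq_iff)
    next
      case False
      then have "re w \<noteq> -1" and ratio: "im z / (re z + 1) = im w / (re w + 1)"
        using \<open>f z = f w\<close> by (auto simp: f_def split: if_splits)
      then have "re z = re w"
        using re_eq_if_nrm_eq_1[OF ns] z w False by (metis mem_Collect_eq)
      moreover have "re z + 1 \<noteq> 0" using False by (simp add: add_eq_0_iff2)
      ultimately have "im z = im w" using ratio by (simp add: divide_cancel_right)
      with \<open>re z = re w\<close> show ?thesis by (simp add: qext_eq_iff)
    qed
  qed
  then have "card {z::'a qext. nrm z = 1} \<le> card (UNIV :: 'a option set)"
    by (rule card_inj_on_le) auto
  then show ?thesis by simp
qed

lemma exists_nrm_eq_1_order_card_Suc:
  assumes "(2::'a::{field,finite}) \<noteq> 0"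
  shows "\<exists>u::'a qext. nrm u = 1 \<and> (\<forall>n. u ^ n = 1 \<longleftrightarrow> (CARD('a) + 1) dvd n)"
proof -
  define q where "q = CARD('a)"
  have ns: "\<forall>b::'a. some_nonsquare \<noteq> b ^ 2" by (rule some_nonsquare_not_square[OF assms])
  have "\<exists>w. z * w = 1" if "z \<noteq> 0" for z :: "'a qext"
    using qext_right_inverse[OF ns that] by blast
  then obtain G :: "'a qext" where order: "\<And>n. G ^ n = 1 \<longleftrightarrow> (q * q - 1) dvd n"
    using finite_units_cyclic[where 'a="'a qext"] by (auto simp: card_qext q_def)
  have "card {0::'a, 1} \<le> q" unfolding q_def by (rule card_mono) auto
  then have "q \<ge> 2" by simp
  then have q_sq: "q * q - 1 = (q - 1) * (q + 1)"
    by (cases q) simp_all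
  have "2 * 2 \<le> q * q" using mult_le_mono[OF \<open>q \<ge> 2\<close> \<open>q \<ge> 2\<close>] .
  then have "q * q - 1 > 0" by simp
  then have "G \<noteq> 0" using order[of "q * q - 1"] by (auto simp: power_0_left)
  then have "nrm G ^ (q - 1) = 1"
    unfolding q_def by (intro finite_field_power_card_minus_1) (simp add: nrm_eq_0_iff[OF ns])
  then have "nrm (G ^ (q - 1)) = 1" by (simp add: nrm_power)
  moreover have "(G ^ (q - 1)) ^ n = 1 \<longleftrightarrow> (q + 1) dvd n" for n
  proof -
    have "(G ^ (q - 1)) ^ n = 1 \<longleftrightarrow> (q - 1) * (q + 1) dvd (q - 1) * n"
      using order[of "(q - 1) * n"] by (simp only: q_sq power_mult)
    also have "\<dots> \<longleftrightarrow> (q + 1) dvd n" using \<open>q \<ge> 2\<close> by (simp only: nat_mult_dvd_cancel_disj) simp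
    finally show ?thesis .
  qed
  ultimately show ?thesis unfolding q_def by blast
qed

lemma power_card_Suc_if_nrm_eq_1:
  fixes z :: "'a::{field,finite} qext"
  assumes "(2::'a) \<noteq> 0" and "nrm z = 1"
  shows "z ^ (CARD('a) + 1) = 1"
proof -
  obtain u :: "'a qext" where "nrm u = 1" and order: "\<And>n. u ^ n = 1 \<longleftrightarrow> (CARD('a) + 1) dvd n"
    using exists_nrm_eq_1_order_card_Suc[OF assms(1)] by blast
  then have "u * qconj u = 1" by (simp add: mult_qconj qext_eq_iff)
  have "inj_on (\<lambda>i. u ^ i) {..<CARD('a) + 1}"
  proof (rule inj_onI)
    fix i j assume "i \<in> {..<CARD('a) + 1}" "j \<in> {..<CARD('a) + 1}" "u ^ i = u ^ j"
    then show "i = j"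
      using power_eq_power_iff_cong[OF \<open>u * qconj u = 1\<close> order]
      by (auto intro: cong_less_modulus_unique_nat)
  qed
  then have "card ((\<lambda>i. u ^ i) ` {..<CARD('a) + 1}) = CARD('a) + 1"
    by (simp add: card_image)
  moreover have subset: "(\<lambda>i. u ^ i) ` {..<CARD('a) + 1} \<subseteq> {z. nrm z = 1}"
    using \<open>nrm u = 1\<close> by (auto simp: nrm_power)
  ultimately have "(\<lambda>i. u ^ i) ` {..<CARD('a) + 1} = {z. nrm z = 1}"
    using card_seteq[OF _ subset] card_nrm_eq_1_le[OF some_nonsquare_not_square[OF assms(1)]]
    by simp
  then obtain i where "z = u ^ i" using assms(2) by auto
  then have "z ^ (CARD('a) + 1) = (u ^ (CARD('a) + 1)) ^ i" by (metis power_mult mult.commute)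
  then show ?thesis using order[of "CARD('a) + 1"] by simp
qed

lemma four_neq_zero:
  assumes "(2::'a::field) \<noteq> 0"
  shows "(4::'a) \<noteq> 0"
proof -
  have "(4::'a) = 2 * 2" by simp
  then show ?thesis using assms by (simp only: mult_eq_0_iff) simp
qed

lemma mem_S_set_iff:
  fixes a :: "'a::{field,finite}"
  assumes two: "(2::'a) \<noteq> 0"
  shows "a \<in> S_set \<longleftrightarrow> (\<exists>u. u \<noteq> 0 \<and> u ^ 2 \<noteq> 1 \<and> a = u + inverse u)"
proof
  assume "a \<in> S_set"
  then obtain b where "b \<noteq> 0" and b: "a ^ 2 - 4 = b ^ 2" by (auto simp: S_set_def)
  have "(a + b) / 2 * ((a - b) / 2) = (a ^ 2 - b ^ 2) / 4"
    by (simp add: power2_eq_square algebra_simps)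
  also have "\<dots> = 1" using b four_neq_zero[OF two] by (simp add: algebra_simps)
  finally have inv: "inverse ((a + b) / 2) = (a - b) / 2" by (rule inverse_unique)
  have "a = (a + b) / 2 + (a - b) / 2" using two by (simp add: field_simps)
  moreover have "(a + b) / 2 \<noteq> 0" using inv two \<open>b \<noteq> 0\<close> by (auto simp: field_simps)
  moreover have "((a + b) / 2) ^ 2 \<noteq> 1"
  proof
    assume "((a + b) / 2) ^ 2 = 1"
    then have "inverse ((a + b) / 2) = (a + b) / 2" by (intro inverse_unique) (simp add: power2_eq_square)
    then show False using inv two \<open>b \<noteq> 0\<close> by (simp add: field_simps)
  qed
  ultimately show "\<exists>u. u \<noteq> 0 \<and> u ^ 2 \<noteq> 1 \<and> a = u + inverse u" using inv by metis
next
  assume "\<exists>u. u \<noteq> 0 \<and> u ^ 2 \<noteq> 1 \<and> a = u + inverse u"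
  then obtain u where "u \<noteq> 0" "u ^ 2 \<noteq> 1" and a: "a = u + inverse u" by blast
  then have "u - inverse u \<noteq> 0" by (auto simp: power2_eq_square field_simps)
  moreover have "a ^ 2 - 4 = (u - inverse u) ^ 2"
    using \<open>u \<noteq> 0\<close> by (simp add: a power2_eq_square field_simps)
  ultimately show "a \<in> S_set" unfolding S_set_def by blast
qed

lemma mem_N_set_iff:
  fixes b :: "'a::{field,finite}"
  assumes two: "(2::'a) \<noteq> 0"
  shows "b \<in> N_set \<longleftrightarrow> (\<exists>z::'a qext. nrm z = 1 \<and> im z \<noteq> 0 \<and> b = 2 * re z)"
proof
  assume "b \<in> N_set"
  then have nonsquare: "\<forall>c. b ^ 2 - 4 \<noteq> c ^ 2" by (simp add: N_set_def)
  then obtain t where t: "b ^ 2 - 4 = some_nonsquare * t ^ 2"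
    using nonsquare_eq_mult_square some_nonsquare_not_square[OF two] by blast
  define z :: "'a qext" where "z = Ext (b / 2) (t / 2)"
  have "nrm z = (b ^ 2 - some_nonsquare * t ^ 2) / 4"
    by (simp add: z_def nrm_def power_divide diff_divide_distrib)
  also have "\<dots> = 1" using four_neq_zero[OF two] by (simp flip: t)
  finally have "nrm z = 1" .
  moreover have "im z \<noteq> 0"
    using nonsquare[rule_format, of 0] t two by (auto simp: z_def)
  moreover have "b = 2 * re z" using two by (simp add: z_def)
  ultimately show "\<exists>z::'a qext. nrm z = 1 \<and> im z \<noteq> 0 \<and> b = 2 * re z" by blast
next
  assume "\<exists>z::'a qext. nrm z = 1 \<and> im z \<noteq> 0 \<and> b = 2 * re z"
  then obtain z :: "'a qext" where nrm: "nrm z = 1" and "im z \<noteq> 0" and b: "b = 2 * re z"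
    by blast
  have "b ^ 2 - 4 = 4 * (re z ^ 2 - 1)" by (simp add: b power2_eq_square algebra_simps)
  also have "re z ^ 2 - 1 = some_nonsquare * im z ^ 2" using nrm by (simp add: nrm_def algebra_simps)
  finally have b4: "b ^ 2 - 4 = some_nonsquare * (2 * im z) ^ 2"
    by (simp add: power2_eq_square algebra_simps)
  show "b \<in> N_set"
    unfolding N_set_def
  proof (clarify)
    fix c assume "b ^ 2 - 4 = c ^ 2"
    moreover have "2 * im z \<noteq> 0" using two \<open>im z \<noteq> 0\<close> by simp
    ultimately obtain w where "w \<noteq> 0" and "some_nonsquare * w ^ 2 = c ^ 2" using b4 by metis
    then have "some_nonsquare = (c / w) ^ 2" by (simp add: power_divide nonzero_eq_divide_eq)
    then show False using some_nonsquare_not_square[OF two] by blast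
  qed
qed

lemma dickson_eq_on_S_set_iff:
  assumes two: "(2::'a::{field,finite}) \<noteq> 0" and nonempty: "(S_set :: 'a set) \<noteq> {}"
  shows "(\<forall>a \<in> (S_set :: 'a set). dickson k a = dickson l a) \<longleftrightarrow>
    [int k = int l] (mod int (CARD('a) - 1)) \<or> [int k = - int l] (mod int (CARD('a) - 1))"
    (is "_ \<longleftrightarrow> ?cong")
proof -
  have "(\<forall>a \<in> (S_set :: 'a set). dickson k a = dickson l a) \<longleftrightarrow>
    (\<forall>u::'a. u \<noteq> 0 \<and> u ^ 2 \<noteq> 1 \<longrightarrow> dickson k (u + inverse u) = dickson l (u + inverse u))"
    unfolding Ball_def mem_S_set_iff[OF two] by auto
  also have "\<dots> \<longleftrightarrow>
    (\<forall>u::'a. u \<noteq> 0 \<and> u ^ 2 \<noteq> 1 \<longrightarrow> u ^ k + inverse u ^ k = u ^ l + inverse u ^ l)"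
    by (simp add: dickson_add_inverse)
  also have "\<dots> \<longleftrightarrow> ?cong"
  proof
    obtain g :: 'a where order: "\<And>n. g ^ n = 1 \<longleftrightarrow> (CARD('a) - 1) dvd n"
      and gen: "\<And>x. x \<noteq> 0 \<Longrightarrow> \<exists>i. x = g ^ i"
      using finite_field_cyclic by blast
    obtain a where "a \<in> (S_set :: 'a set)" using nonempty by blast
    then obtain u :: 'a where "u \<noteq> 0" "u ^ 2 \<noteq> 1"
      by (auto simp: mem_S_set_iff[OF two])
    then obtain i where "u = g ^ i" using gen by blast
    then have "u ^ 2 = (g ^ 2) ^ i" by (metis power_mult mult.commute)
    then have "g ^ 2 \<noteq> 1" using \<open>u ^ 2 \<noteq> 1\<close> by auto
    have "g \<noteq> 0" using \<open>u = g ^ i\<close> \<open>u \<noteq> 0\<close> \<open>u ^ 2 \<noteq> 1\<close> by (cases i) auto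
    assume "\<forall>u::'a. u \<noteq> 0 \<and> u ^ 2 \<noteq> 1 \<longrightarrow> u ^ k + inverse u ^ k = u ^ l + inverse u ^ l"
    then have "g ^ k + inverse g ^ k = g ^ l + inverse g ^ l"
      using \<open>g \<noteq> 0\<close> \<open>g ^ 2 \<noteq> 1\<close> by blast
    then show ?cong
      by (intro cong_if_power_sum_eq[OF _ right_inverse[OF \<open>g \<noteq> 0\<close>] order]) auto
  next
    assume ?cong
    show "\<forall>u::'a. u \<noteq> 0 \<and> u ^ 2 \<noteq> 1 \<longrightarrow> u ^ k + inverse u ^ k = u ^ l + inverse u ^ l"
    proof (intro allI impI)
      fix u :: 'a assume "u \<noteq> 0 \<and> u ^ 2 \<noteq> 1"
      then show "u ^ k + inverse u ^ k = u ^ l + inverse u ^ l"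
        using power_sum_eq_if_cong[OF right_inverse finite_field_power_card_minus_1 \<open>?cong\<close>]
        by simp
    qed
  qed
  finally show ?thesis .
qed

lemma dickson_eq_on_N_set_iff:
  assumes two: "(2::'a::{field,finite}) \<noteq> 0"
  shows "(\<forall>b \<in> (N_set :: 'a set). dickson k b = dickson l b) \<longleftrightarrow>
    [int k = int l] (mod int (CARD('a) + 1)) \<or> [int k = - int l] (mod int (CARD('a) + 1))"
    (is "_ \<longleftrightarrow> ?cong")
proof -
  have conj_inverse: "z * qconj z = 1" if "nrm z = 1" for z :: "'a qext"
    using that by (simp add: mult_qconj qext_eq_iff)
  have dickson_trace: "Ext (dickson j (2 * re z)) 0 = z ^ j + qconj z ^ j"
    if "nrm z = 1" for z :: "'a qext" and j
    using dickson_add_inverse[OF conj_inverse[OF that], of j] by (simp add: add_qconj dickson_Ext)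
  have "(\<forall>b \<in> (N_set :: 'a set). dickson k b = dickson l b) \<longleftrightarrow>
    (\<forall>z::'a qext. nrm z = 1 \<and> im z \<noteq> 0 \<longrightarrow> dickson k (2 * re z) = dickson l (2 * re z))"
    unfolding Ball_def mem_N_set_iff[OF two] by auto
  also have "\<dots> \<longleftrightarrow>
    (\<forall>z::'a qext. nrm z = 1 \<and> im z \<noteq> 0 \<longrightarrow> z ^ k + qconj z ^ k = z ^ l + qconj z ^ l)"
    by (auto simp flip: dickson_trace)
  also have "\<dots> \<longleftrightarrow> ?cong"
  proof
    obtain u :: "'a qext" where "nrm u = 1"
      and order: "\<And>n. u ^ n = 1 \<longleftrightarrow> (CARD('a) + 1) dvd n"
      using exists_nrm_eq_1_order_card_Suc[OF two] by blast
    have "im u \<noteq> 0"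
    proof
      assume "im u = 0"
      then have "u ^ 2 = 1" using \<open>nrm u = 1\<close> by (simp add: qext_eq_iff nrm_def power2_eq_square)
      then have "(CARD('a) + 1) dvd 2" using order by blast
      moreover have "card {0::'a, 1} \<le> CARD('a)" by (rule card_mono) auto
      ultimately show False by (auto dest: dvd_imp_le)
    qed
    assume "\<forall>z::'a qext. nrm z = 1 \<and> im z \<noteq> 0 \<longrightarrow> z ^ k + qconj z ^ k = z ^ l + qconj z ^ l"
    then have "u ^ k + qconj u ^ k = u ^ l + qconj u ^ l"
      using \<open>nrm u = 1\<close> \<open>im u \<noteq> 0\<close> by blast
    then show ?cong
      using qext_no_zero_divisors[OF some_nonsquare_not_square[OF two]]
      by (intro cong_if_power_sum_eq[OF _ conj_inverse[OF \<open>nrm u = 1\<close>] order]) auto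
  next
    assume ?cong
    show "\<forall>z::'a qext. nrm z = 1 \<and> im z \<noteq> 0 \<longrightarrow> z ^ k + qconj z ^ k = z ^ l + qconj z ^ l"
    proof (intro allI impI)
      fix z :: "'a qext" assume "nrm z = 1 \<and> im z \<noteq> 0"
      then show "z ^ k + qconj z ^ k = z ^ l + qconj z ^ l"
        using power_sum_eq_if_cong[OF conj_inverse power_card_Suc_if_nrm_eq_1[OF two] \<open>?cong\<close>]
        by simp
    qed
  qed
  finally show ?thesis .
qed

theorem lemma4p3:
  fixes k l :: nat
  assumes "odd CARD('a)"
  shows "((S_set :: 'a::{field,finite} set) \<noteq> {} \<longrightarrow>
           ((\<forall>a \<in> (S_set :: 'a set). dickson k a = dickson l a) \<longleftrightarrow>
            ([int k = int l] (mod (int CARD('a) - 1)) \<or> [int k = - int l] (mod (int CARD('a) - 1)))))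
       \<and> ((\<forall>b \<in> (N_set :: 'a set). dickson k b = dickson l b) \<longleftrightarrow>
            ([int k = int l] (mod (int CARD('a) + 1)) \<or> [int k = - int l] (mod (int CARD('a) + 1))))"
proof -
  have two: "(2::'a) \<noteq> 0" by (rule two_neq_zero_if_odd_card[OF assms])
  have moduli: "int (CARD('a) - 1) = int CARD('a) - 1" "int (CARD('a) + 1) = int CARD('a) + 1"
    by (simp_all add: Suc_leI of_nat_diff)
  show ?thesis
    using dickson_eq_on_S_set_iff[OF two, unfolded moduli]
      dickson_eq_on_N_set_iff[OF two, unfolded moduli] by blast
qed

end
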